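(* Let $G$ be a tree. Then the independence complex $\Delta(G)$ is sortable if and only if $G$ is a path graph.
   Context: The independence complex $\Delta(G)$ is the simplicial complex of all independent sets of $G$. For finite $F,G\subset\mathbb{N}$ with $|F|=r,|G|=s$, write $\mathbf{x}^F\mathbf{x}^G=x_{i_1}\cdots x_{i_{r+s}}$ with $i_1\le\cdots\le i_{r+s}$ (where $\mathbf{x}^F=\prod_{i\in F}x_i$) and set $\mathrm{sort}(F,G)=(\{i_k:k\text{ odd}\},\{i_k:k\text{ even}\})$. A simplicial complex $\Delta$ with $V(\Delta)\subset\mathbb{N}$ is sortable with respect to the given labeling if $\mathrm{sort}(F,G)\in\Delta\times\Delta$ for all $F,G\in\Delta$; $\Delta$ is sortable if it is sortable with respect to some labeling of its vertices by distinct integers. *)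

theory Defs
  imports Main "HOL-Library.Multiset"
begin

definition simple_graph :: "'a set \<Rightarrow> ('a \<Rightarrow> 'a \<Rightarrow> bool) \<Rightarrow> bool" where
  "simple_graph V E \<longleftrightarrow> finite V \<and> (\<forall>u v. E u v \<longrightarrow> u \<in> V \<and> v \<in> V)
     \<and> (\<forall>u v. E u v \<longrightarrow> E v u) \<and> (\<forall>v. \<not> E v v)"

definition is_walk :: "'a set \<Rightarrow> ('a \<Rightarrow> 'a \<Rightarrow> bool) \<Rightarrow> 'a list \<Rightarrow> bool" where
  "is_walk V E ws \<longleftrightarrow> ws \<noteq> [] \<and> set ws \<subseteq> V \<and> (\<forall>i. Suc i < length ws \<longrightarrow> E (ws ! i) (ws ! Suc i))"

definition connected_graph :: "'a set \<Rightarrow> ('a \<Rightarrow> 'a \<Rightarrow> bool) \<Rightarrow> bool" where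
  "connected_graph V E \<longleftrightarrow> (\<forall>u\<in>V. \<forall>v\<in>V. \<exists>ws. is_walk V E ws \<and> hd ws = u \<and> last ws = v)"

definition is_cycle :: "'a set \<Rightarrow> ('a \<Rightarrow> 'a \<Rightarrow> bool) \<Rightarrow> 'a list \<Rightarrow> bool" where
  "is_cycle V E cs \<longleftrightarrow> length cs \<ge> 3 \<and> distinct cs \<and> is_walk V E cs \<and> E (last cs) (hd cs)"

definition is_tree :: "'a set \<Rightarrow> ('a \<Rightarrow> 'a \<Rightarrow> bool) \<Rightarrow> bool" where
  "is_tree V E \<longleftrightarrow> simple_graph V E \<and> V \<noteq> {} \<and> connected_graph V E \<and> (\<nexists>cs. is_cycle V E cs)"

definition is_path_graph :: "'a set \<Rightarrow> ('a \<Rightarrow> 'a \<Rightarrow> bool) \<Rightarrow> bool" where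
  "is_path_graph V E \<longleftrightarrow> (\<exists>vs. distinct vs \<and> set vs = V \<and>
     (\<forall>u v. E u v \<longleftrightarrow> (\<exists>i. Suc i < length vs \<and>
        ((u = vs ! i \<and> v = vs ! Suc i) \<or> (v = vs ! i \<and> u = vs ! Suc i)))))"

definition independent_set :: "'a set \<Rightarrow> ('a \<Rightarrow> 'a \<Rightarrow> bool) \<Rightarrow> 'a set \<Rightarrow> bool" where
  "independent_set V E S \<longleftrightarrow> S \<subseteq> V \<and> (\<forall>u\<in>S. \<forall>v\<in>S. \<not> E u v)"

definition independence_complex :: "'a set \<Rightarrow> ('a \<Rightarrow> 'a \<Rightarrow> bool) \<Rightarrow> 'a set set" where
  "independence_complex V E = {S. independent_set V E S}"

text \<open>For finite F, G of naturals: sort the multiset union i_1 \<le> ... \<le> i_{r+s};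
first component collects the entries at odd positions (1-indexed), second at
even positions.\<close>
definition sort_pair :: "nat set \<Rightarrow> nat set \<Rightarrow> nat set \<times> nat set" where
  "sort_pair F G = (let xs = sorted_list_of_multiset (mset_set F + mset_set G) in
     (set (nths xs {i. even i}), set (nths xs {i. odd i})))"

definition sortable_wrt_labeling :: "nat set set \<Rightarrow> bool" where
  "sortable_wrt_labeling D \<longleftrightarrow> (\<forall>F\<in>D. \<forall>G\<in>D. sort_pair F G \<in> D \<times> D)"

definition complex_vertices :: "'a set set \<Rightarrow> 'a set" where
  "complex_vertices D = \<Union>D"

definition sortable :: "'a set set \<Rightarrow> bool" where
  "sortable D \<longleftrightarrow> (\<exists>l :: 'a \<Rightarrow> nat. inj_on l (complex_vertices D)
      \<and> sortable_wrt_labeling ((\<lambda>F. l ` F) ` D))"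

end

theory Submission
  imports Defs
begin

text \<open>
  Label the vertices of a path by their positions. Then the faces of the independence complex
  are the sets of positions containing no two consecutive numbers, and this property survives
  sorting: in the sorted union of two such sets each window \<open>{k, k + 1}\<close> occurs at most
  twice, so an occurrence of \<open>k\<close> followed by \<open>k + 1\<close> sits in adjacent positions, which go
  to different sides of the sorted pair.

  Conversely, in a tree that is not a path some vertex \<open>v\<close> has three neighbours, and these
  are pairwise non-adjacent since a tree has no triangles. Sorting the faces \<open>{v}\<close> and
  \<open>{a, b, c}\<close> under any labelling produces, among four labels, a part containing \<open>v\<close>
  together with one of its neighbours, which is not a face. A tree of maximum degree two is a
  path: a longest simple path has no chords by acyclicity, and it cannot miss a vertex by
  connectivity and the degree bound.
\<close>

section \<open>Sorting sets without consecutive elements\<close>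

definition no_consecutive :: "nat set \<Rightarrow> bool" where
  "no_consecutive T \<longleftrightarrow> (\<forall>i\<in>T. Suc i \<notin> T)"

lemma sorted_nth_eq_Suc_imp_adjacent:
  assumes sorted: "sorted xs"
    and window: "\<And>k. length (filter (\<lambda>x. x = k \<or> x = Suc k) xs) \<le> 2"
    and ij: "i < length xs" "j < length xs" "xs ! j = Suc (xs ! i)"
  shows "j = Suc i"
proof -
  have "i < j"
    using ij sorted_nth_mono[OF sorted, of j i] by (metis Suc_n_not_le_n not_le)
  show ?thesis
  proof (rule ccontr)
    assume "j \<noteq> Suc i"
    with \<open>i < j\<close> have "Suc (Suc i) \<le> j" by simp
    let ?k = "xs ! i"
    have "{i..j} \<subseteq> {t. t < length xs \<and> (xs ! t = ?k \<or> xs ! t = Suc ?k)}"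
    proof
      fix t assume "t \<in> {i..j}"
      then have "t < length xs" "xs ! i \<le> xs ! t" "xs ! t \<le> xs ! j"
        using ij sorted_nth_mono[OF sorted, of i t] sorted_nth_mono[OF sorted, of t j] by auto
      then show "t \<in> {t. t < length xs \<and> (xs ! t = ?k \<or> xs ! t = Suc ?k)}"
        using ij by auto
    qed
    then have "card {i..j} \<le> length (filter (\<lambda>x. x = ?k \<or> x = Suc ?k) xs)"
      unfolding length_filter_conv_card by (intro card_mono) auto
    with window[of ?k] \<open>Suc (Suc i) \<le> j\<close> show False by simp
  qed
qed

lemma card_no_consecutive_window:
  assumes "no_consecutive F"
  shows "card {x\<in>F. x = k \<or> x = Suc k} \<le> 1"
proof -
  have "{x\<in>F. x = k \<or> x = Suc k} \<subseteq> {k} \<or> {x\<in>F. x = k \<or> x = Suc k} \<subseteq> {Suc k}"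
    using assms unfolding no_consecutive_def by auto
  then show ?thesis
    using card_mono[of "{k}"] card_mono[of "{Suc k}"] by fastforce
qed

lemma no_consecutive_set_nths:
  assumes "sorted xs"
    and "\<And>k. length (filter (\<lambda>x. x = k \<or> x = Suc k) xs) \<le> 2"
    and "\<And>i. P i \<Longrightarrow> \<not> P (Suc i)"
  shows "no_consecutive (set (nths xs {i. P i}))"
  unfolding no_consecutive_def set_nths
  using sorted_nth_eq_Suc_imp_adjacent[OF assms(1,2)] assms(3) by fastforce

lemma sort_pair_no_consecutive:
  assumes "finite F" "finite G" "no_consecutive F" "no_consecutive G"
  shows "no_consecutive (fst (sort_pair F G)) \<and> no_consecutive (snd (sort_pair F G))"
proof -
  define xs where "xs = sorted_list_of_multiset (mset_set F + mset_set G)"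
  have window: "length (filter (\<lambda>x. x = k \<or> x = Suc k) xs) \<le> 2" for k
  proof -
    have "length (filter (\<lambda>x. x = k \<or> x = Suc k) xs)
        = size (filter_mset (\<lambda>x. x = k \<or> x = Suc k) (mset xs))"
      by (metis mset_filter size_mset)
    also have "\<dots> = card {x\<in>F. x = k \<or> x = Suc k} + card {x\<in>G. x = k \<or> x = Suc k}"
      using assms(1,2) by (simp add: xs_def filter_mset_mset_set)
    finally show ?thesis
      using card_no_consecutive_window[OF assms(3), of k] card_no_consecutive_window[OF assms(4), of k]
      by linarith
  qed
  have "sorted xs" unfolding xs_def by simp
  then show ?thesis
    unfolding sort_pair_def xs_def[symmetric] Let_def
    using no_consecutive_set_nths[OF _ window] by simp
qed

lemma sort_pair_subset:
  assumes "finite F" "finite G"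
  shows "fst (sort_pair F G) \<subseteq> F \<union> G" "snd (sort_pair F G) \<subseteq> F \<union> G"
  using assms by (auto simp: sort_pair_def Let_def dest!: set_nths_subset[THEN subsetD])

lemma sortable_wrt_labeling_no_consecutive:
  "sortable_wrt_labeling {T. T \<subseteq> {..<n} \<and> no_consecutive T}"
  unfolding sortable_wrt_labeling_def
proof (intro ballI)
  fix F G assume F: "F \<in> {T. T \<subseteq> {..<n} \<and> no_consecutive T}"
    and G: "G \<in> {T. T \<subseteq> {..<n} \<and> no_consecutive T}"
  then have "finite F" "finite G" using finite_subset by auto
  with F G show "sort_pair F G \<in> {T. T \<subseteq> {..<n} \<and> no_consecutive T} \<times> {T. T \<subseteq> {..<n} \<and> no_consecutive T}"
    using sort_pair_no_consecutive[of F G] sort_pair_subset[of F G] by (auto simp: mem_Times_iff)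
qed

lemma sortable_image:
  assumes inj: "inj_on f (\<Union>C)" and sortable_C: "sortable_wrt_labeling C"
  shows "sortable ((\<lambda>T. f ` T) ` C)"
proof -
  define l where "l = the_inv_into (\<Union>C) f"
  have "inj_on l (complex_vertices ((\<lambda>T. f ` T) ` C))"
    unfolding l_def complex_vertices_def using inj_on_the_inv_into[OF inj] by (simp add: image_Union)
  moreover have "(\<lambda>S. l ` S) ` (\<lambda>T. f ` T) ` C = C"
  proof -
    have "l ` f ` T = T" if "T \<in> C" for T
    proof -
      have "l (f x) = x" if "x \<in> T" for x
        using \<open>T \<in> C\<close> that the_inv_into_f_f[OF inj] unfolding l_def by blast
      then show ?thesis by (simp add: image_image)
    qed
    then show ?thesis by (simp add: image_image cong: image_cong)
  qed
  ultimately show ?thesis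
    unfolding sortable_def using sortable_C by metis
qed

section \<open>Independence complexes of paths\<close>

definition path_edge :: "'a list \<Rightarrow> 'a \<Rightarrow> 'a \<Rightarrow> bool" where
  "path_edge vs u v \<longleftrightarrow> (\<exists>i. Suc i < length vs \<and>
     ((u = vs ! i \<and> v = vs ! Suc i) \<or> (v = vs ! i \<and> u = vs ! Suc i)))"

lemma is_path_graph_iff:
  "is_path_graph V E \<longleftrightarrow> (\<exists>vs. distinct vs \<and> set vs = V \<and> E = path_edge vs)"
  unfolding is_path_graph_def path_edge_def by (simp add: fun_eq_iff)

lemma path_edge_nth_iff:
  assumes "distinct vs" "i < length vs" "j < length vs"
  shows "path_edge vs (vs ! i) (vs ! j) \<longleftrightarrow> j = Suc i \<or> i = Suc j"
  using assms nth_eq_iff_index_eq unfolding path_edge_def by (metis Suc_lessD)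

lemma independence_complex_path:
  assumes "distinct vs"
  shows "independence_complex (set vs) (path_edge vs)
           = (\<lambda>T. (!) vs ` T) ` {T. T \<subseteq> {..<length vs} \<and> no_consecutive T}"
proof (intro equalityI subsetI)
  fix S assume "S \<in> independence_complex (set vs) (path_edge vs)"
  then have S: "S \<subseteq> set vs" "\<And>u v. u \<in> S \<Longrightarrow> v \<in> S \<Longrightarrow> \<not> path_edge vs u v"
    unfolding independence_complex_def independent_set_def by auto
  define T where "T = {i. i < length vs \<and> vs ! i \<in> S}"
  have "S = (!) vs ` T"
    using S(1) unfolding T_def by (fastforce simp: in_set_conv_nth)
  moreover have "no_consecutive T"
    unfolding no_consecutive_def T_def
    using S(2) path_edge_nth_iff[OF assms] by auto
  ultimately show "S \<in> (\<lambda>T. (!) vs ` T) ` {T. T \<subseteq> {..<length vs} \<and> no_consecutive T}"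
    unfolding T_def by blast
next
  fix S assume "S \<in> (\<lambda>T. (!) vs ` T) ` {T. T \<subseteq> {..<length vs} \<and> no_consecutive T}"
  then obtain T where T: "T \<subseteq> {..<length vs}" "no_consecutive T" and S: "S = (!) vs ` T"
    by blast
  have "\<not> path_edge vs (vs ! i) (vs ! j)" if "i \<in> T" "j \<in> T" for i j
    using that T path_edge_nth_iff[OF assms] unfolding no_consecutive_def by blast
  then show "S \<in> independence_complex (set vs) (path_edge vs)"
    unfolding independence_complex_def independent_set_def S using T(1) by auto
qed

lemma path_graph_sortable:
  assumes "is_path_graph V E"
  shows "sortable (independence_complex V E)"
proof -
  obtain vs where vs: "distinct vs" "set vs = V" "E = path_edge vs"
    using assms unfolding is_path_graph_iff by blast
  have "inj_on ((!) vs) (\<Union>{T. T \<subseteq> {..<length vs} \<and> no_consecutive T})"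
    using vs(1) by (intro inj_on_nth) auto
  from sortable_image[OF this sortable_wrt_labeling_no_consecutive]
  show ?thesis using independence_complex_path[OF vs(1)] vs(2,3) by simp
qed

section \<open>Claws\<close>

lemma sort_pair_singleton_card_3:
  assumes "p \<notin> Q" "card Q = 3"
  shows "\<exists>C\<in>{fst (sort_pair {p} Q), snd (sort_pair {p} Q)}. p \<in> C \<and> (\<exists>q\<in>Q. q \<in> C)"
proof -
  have "finite Q" using assms(2) card.infinite by fastforce
  define xs where "xs = sorted_list_of_set (insert p Q)"
  have xs: "distinct xs" "length xs = 4" "set xs = insert p Q"
    unfolding xs_def using assms \<open>finite Q\<close>
    by (simp_all only: distinct_sorted_list_of_set length_sorted_list_of_set
        set_sorted_list_of_set finite_insert card_insert_disjoint) simp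
  have sort_pair_eq: "sort_pair {p} Q = (set (nths xs {i. even i}), set (nths xs {i. odd i}))"
    using assms(1) \<open>finite Q\<close>
    by (simp add: sort_pair_def xs_def Let_def mset_set_Union[symmetric] sorted_list_of_mset_set)
  obtain t where t: "t < 4" "xs ! t = p"
    using xs by (metis in_set_conv_nth insertI1)
  \<comment> \<open>the element two places away from p in the sorted list lies in the same parity class\<close>
  define s where "s = (if t < 2 then t + 2 else t - 2)"
  have "s < 4" "s \<noteq> t" "even s \<longleftrightarrow> even t"
    unfolding s_def using t(1) by presburger+
  then have "xs ! s \<in> Q"
    using xs t nth_eq_iff_index_eq[of xs s t] nth_mem[of s xs] by auto
  have same_class: "p \<in> set (nths xs {i. P i}) \<and> xs ! s \<in> set (nths xs {i. P i})"
    if "P t" "P s" for P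
    using that t xs(2) \<open>s < 4\<close> unfolding set_nths by auto
  show ?thesis
  proof (cases "even t")
    case True
    then show ?thesis
      using same_class[of even] \<open>even s \<longleftrightarrow> even t\<close> \<open>xs ! s \<in> Q\<close> sort_pair_eq by auto
  next
    case False
    then show ?thesis
      using same_class[of odd] \<open>even s \<longleftrightarrow> even t\<close> \<open>xs ! s \<in> Q\<close> sort_pair_eq by auto
  qed
qed

lemma acyclic_no_triangle:
  assumes G: "simple_graph V E" and "\<nexists>cs. is_cycle V E cs" "E v x" "E v y"
  shows "\<not> E x y"
proof
  assume "E x y"
  have edges: "E ([v, x, y] ! i) ([v, x, y] ! Suc i)" if "Suc i < length [v, x, y]" for i
  proof -
    have "i = 0 \<or> i = 1" using that by auto
    then show ?thesis using \<open>E v x\<close> \<open>E x y\<close> by auto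
  qed
  have "distinct [v, x, y]" "set [v, x, y] \<subseteq> V" "E y v"
    using G \<open>E v x\<close> \<open>E v y\<close> \<open>E x y\<close> unfolding simple_graph_def by auto
  with edges have "is_cycle V E [v, x, y]"
    unfolding is_cycle_def is_walk_def by simp
  with assms(2) show False by blast
qed

lemma claw_not_sortable:
  assumes G: "simple_graph V E" and "v \<in> V"
    and "E v a" "E v b" "E v c" "a \<noteq> b" "a \<noteq> c" "b \<noteq> c"
    and "\<not> E a b" "\<not> E a c" "\<not> E b c"
  shows "\<not> sortable (independence_complex V E)"
proof
  let ?D = "independence_complex V E"
  assume "sortable ?D"
  then obtain l where inj: "inj_on l (complex_vertices ?D)"
    and sortable_l: "sortable_wrt_labeling ((\<lambda>F. l ` F) ` ?D)"
    unfolding sortable_def by blast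
  have EV: "\<And>u w. E u w \<Longrightarrow> u \<in> V \<and> w \<in> V" and sym: "\<And>u w. E u w \<Longrightarrow> E w u"
    and irrefl: "\<And>u. \<not> E u u"
    using G unfolding simple_graph_def by auto
  have abc: "{a, b, c} \<subseteq> V" "v \<notin> {a, b, c}"
    using assms(3-5) EV irrefl by auto
  have singleton: "{u} \<in> ?D" if "u \<in> V" for u
    using that irrefl unfolding independence_complex_def independent_set_def by auto
  have "{a, b, c} \<in> ?D"
    using abc assms(9-11) sym irrefl unfolding independence_complex_def independent_set_def by auto
  have injV: "inj_on l V"
    using inj singleton unfolding complex_vertices_def by (blast intro: inj_on_subset)
  then have "inj_on l (insert v {a, b, c})"
    using inj_on_subset abc(1) \<open>v \<in> V\<close> by blast
  then have "l v \<notin> l ` {a, b, c}" "card (l ` {a, b, c}) = 3"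
    using abc(2) assms(6-8) by (auto simp: inj_on_image_mem_iff card_image inj_on_subset)
  let ?L = "(\<lambda>F. l ` F) ` ?D"
  have "{l v} \<in> ?L" "l ` {a, b, c} \<in> ?L"
    using imageI[OF singleton[OF \<open>v \<in> V\<close>], of "\<lambda>F. l ` F"]
      imageI[OF \<open>{a, b, c} \<in> ?D\<close>, of "\<lambda>F. l ` F"] by simp_all
  then have "sort_pair {l v} (l ` {a, b, c}) \<in> ?L \<times> ?L"
    using sortable_l unfolding sortable_wrt_labeling_def by blast
  then have "fst (sort_pair {l v} (l ` {a, b, c})) \<in> ?L" "snd (sort_pair {l v} (l ` {a, b, c})) \<in> ?L"
    by (simp_all add: mem_Times_iff)
  then obtain C q where "C \<in> ?L" "l v \<in> C" "q \<in> l ` {a, b, c}" "q \<in> C"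
    using sort_pair_singleton_card_3[OF \<open>l v \<notin> l ` {a, b, c}\<close> \<open>card (l ` {a, b, c}) = 3\<close>]
    by blast
  then obtain S x where S: "independent_set V E S" "C = l ` S" and x: "x \<in> {a, b, c}" "q = l x"
    unfolding independence_complex_def by auto
  then have "S \<subseteq> V" unfolding independent_set_def by simp
  moreover have "x \<in> V" using x(1) abc(1) by blast
  ultimately have "v \<in> S" "x \<in> S"
    using \<open>l v \<in> C\<close> \<open>q \<in> C\<close> S(2) x(2) inj_on_image_mem_iff[OF injV] \<open>v \<in> V\<close> by auto
  then show False
    using S(1) x(1) assms(3-5) unfolding independent_set_def by blast
qed

section \<open>Trees of maximum degree two\<close>

definition is_simple_path :: "'a set \<Rightarrow> ('a \<Rightarrow> 'a \<Rightarrow> bool) \<Rightarrow> 'a list \<Rightarrow> bool" where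
  "is_simple_path V E ws \<longleftrightarrow> distinct ws \<and> is_walk V E ws"

lemma longest_simple_path_exists:
  assumes "finite V" "V \<noteq> {}"
  obtains ws where "is_simple_path V E ws"
    "\<And>ys. is_simple_path V E ys \<Longrightarrow> length ys \<le> length ws"
proof -
  obtain v where "v \<in> V" using assms(2) by blast
  then have "is_simple_path V E [v]"
    unfolding is_simple_path_def is_walk_def by simp
  moreover have "length ys < Suc (card V)" if "is_simple_path V E ys" for ys
  proof -
    have "distinct ys" "set ys \<subseteq> V"
      using that unfolding is_simple_path_def is_walk_def by auto
    then have "length ys = card (set ys)" by (simp add: distinct_card)
    also have "\<dots> \<le> card V" using card_mono[OF assms(1)] \<open>set ys \<subseteq> V\<close> .
    finally show ?thesis by simp
  qed
  ultimately show ?thesis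
    using that ex_has_greatest_nat[of "is_simple_path V E" "[v]" length "Suc (card V)"] by blast
qed

lemma is_simple_path_Cons:
  assumes "is_simple_path V E ws" "y \<in> V" "y \<notin> set ws" "E y (hd ws)"
  shows "is_simple_path V E (y # ws)"
  using assms unfolding is_simple_path_def is_walk_def
  by (auto simp: nth_Cons hd_conv_nth split: nat.split)

lemma is_simple_path_snoc:
  assumes "is_simple_path V E ws" "y \<in> V" "y \<notin> set ws" "E (last ws) y"
  shows "is_simple_path V E (ws @ [y])"
proof -
  have "E ((ws @ [y]) ! k) ((ws @ [y]) ! Suc k)" if "Suc k < length (ws @ [y])" for k
  proof (cases "Suc k < length ws")
    case True
    then show ?thesis using assms(1) unfolding is_simple_path_def is_walk_def by (simp add: nth_append)
  next
    case False
    with that have "k = length ws - 1" "ws \<noteq> []" by auto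
    then show ?thesis using assms(4) by (simp add: nth_append last_conv_nth)
  qed
  then show ?thesis
    using assms unfolding is_simple_path_def is_walk_def by auto
qed

lemma is_walk_leaves_set:
  assumes "is_walk V E p" "hd p \<in> A" "last p \<notin> A"
  shows "\<exists>x\<in>A. \<exists>y. y \<notin> A \<and> E x y"
proof -
  have p: "p \<noteq> []" "\<And>i. Suc i < length p \<Longrightarrow> E (p ! i) (p ! Suc i)"
    using assms(1) unfolding is_walk_def by auto
  define k where "k = (LEAST k. k < length p \<and> p ! k \<notin> A)"
  have "length p - 1 < length p \<and> p ! (length p - 1) \<notin> A"
    using p(1) assms(3) by (simp add: last_conv_nth)
  then have k: "k < length p" "p ! k \<notin> A"
    using LeastI[of "\<lambda>k. k < length p \<and> p ! k \<notin> A"] unfolding k_def by blast+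
  have "k \<noteq> 0"
    using k(2) assms(2) p(1) by (metis hd_conv_nth)
  then have "p ! (k - 1) \<in> A"
    using not_less_Least[of "k - 1" "\<lambda>k. k < length p \<and> p ! k \<notin> A"] k(1) unfolding k_def by auto
  with k p(2)[of "k - 1"] \<open>k \<noteq> 0\<close> show ?thesis by auto
qed

lemma acyclic_simple_path_no_chord:
  assumes G: "simple_graph V E" and acyclic: "\<nexists>cs. is_cycle V E cs"
    and ws: "is_simple_path V E ws" and "i < j" "j < length ws" "E (ws ! i) (ws ! j)"
  shows "j = Suc i"
proof (rule ccontr)
  assume "j \<noteq> Suc i"
  \<comment> \<open>the segment from position i to j, closed by the chord, is a cycle\<close>
  define cs where "cs = drop i (take (Suc j) ws)"
  have cs: "length cs = Suc j - i" "\<And>k. k < length cs \<Longrightarrow> cs ! k = ws ! (i + k)"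
    unfolding cs_def using \<open>j < length ws\<close> by auto
  have "is_cycle V E cs"
    unfolding is_cycle_def is_walk_def
  proof (intro conjI allI impI)
    show "3 \<le> length cs" "cs \<noteq> []" using cs(1) \<open>i < j\<close> \<open>j \<noteq> Suc i\<close> by auto
    show "distinct cs" "set cs \<subseteq> V"
      using ws unfolding cs_def is_simple_path_def is_walk_def
      by (auto dest: in_set_dropD in_set_takeD)
    show "E (cs ! k) (cs ! Suc k)" if "Suc k < length cs" for k
      using that cs ws \<open>j < length ws\<close> unfolding is_simple_path_def is_walk_def by auto
    have "last cs = cs ! (j - i)" "hd cs = cs ! 0"
      using \<open>cs \<noteq> []\<close> cs(1) by (simp_all add: last_conv_nth hd_conv_nth)
    then have "last cs = ws ! j" "hd cs = ws ! i"
      using cs \<open>i < j\<close> by simp_all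
    then show "E (last cs) (hd cs)"
      using assms(6) G unfolding simple_graph_def by simp
  qed
  with acyclic show False by blast
qed

lemma spanning_chordless_simple_path_is_path_graph:
  assumes G: "simple_graph V E" and ws: "is_simple_path V E ws" "set ws = V"
    and chordless: "\<And>i j. i < j \<Longrightarrow> j < length ws \<Longrightarrow> E (ws ! i) (ws ! j) \<Longrightarrow> j = Suc i"
  shows "is_path_graph V E"
  unfolding is_path_graph_iff
proof (intro exI conjI)
  show "E = path_edge ws"
  proof (intro ext iffI)
    fix u w assume "E u w"
    moreover obtain i j where "i < length ws" "j < length ws" "u = ws ! i" "w = ws ! j"
      using G \<open>E u w\<close> ws(2) unfolding simple_graph_def by (metis in_set_conv_nth)
    ultimately show "path_edge ws u w"
      using chordless[of i j] chordless[of j i] G path_edge_nth_iff[of ws i j] ws(1)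
      unfolding simple_graph_def is_simple_path_def by (metis linorder_neqE_nat)
  next
    fix u w assume "path_edge ws u w"
    then show "E u w"
      using ws(1) G unfolding path_edge_def is_simple_path_def is_walk_def simple_graph_def by blast
  qed
qed (use ws in \<open>auto simp: is_simple_path_def\<close>)

lemma longest_simple_path_spans:
  assumes G: "simple_graph V E" and conn: "connected_graph V E"
    and max_degree_2: "\<And>v a b c. v \<in> V \<Longrightarrow> E v a \<Longrightarrow> E v b \<Longrightarrow> E v c \<Longrightarrow> a = b \<or> a = c \<or> b = c"
    and ws: "is_simple_path V E ws"
    and longest: "\<And>ys. is_simple_path V E ys \<Longrightarrow> length ys \<le> length ws"
  shows "set ws = V"
proof (rule ccontr)
  have ws': "distinct ws" "ws \<noteq> []" "set ws \<subseteq> V" "\<And>i. Suc i < length ws \<Longrightarrow> E (ws ! i) (ws ! Suc i)"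
    using ws unfolding is_simple_path_def is_walk_def by auto
  have EV: "\<And>u w. E u w \<Longrightarrow> u \<in> V \<and> w \<in> V" and sym: "\<And>u w. E u w \<Longrightarrow> E w u"
    using G unfolding simple_graph_def by auto
  assume "set ws \<noteq> V"
  then obtain u where "u \<in> V" "u \<notin> set ws" using ws'(3) by blast
  then obtain p where "is_walk V E p" "hd p = hd ws" "last p = u"
    using conn ws'(2,3) unfolding connected_graph_def by (metis hd_in_set subsetD)
  then obtain i y where i: "i < length ws" and y: "y \<notin> set ws" "E (ws ! i) y"
    using is_walk_leaves_set[of V E p "set ws"] ws'(2) \<open>u \<notin> set ws\<close>
    by (metis hd_in_set in_set_conv_nth)
  have "y \<in> V" using EV y(2) by blast
  consider "i = 0" | "i = length ws - 1" | "0 < i" "Suc i < length ws"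
    using i by linarith
  then show False
  proof cases
    case 1
    then have "is_simple_path V E (y # ws)"
      using is_simple_path_Cons[OF ws \<open>y \<in> V\<close> y(1)] y(2) sym ws'(2) by (simp add: hd_conv_nth)
    then show False using longest by force
  next
    case 2
    then have "last ws = ws ! i" using ws'(2) by (simp add: last_conv_nth)
    then have "is_simple_path V E (ws @ [y])"
      using is_simple_path_snoc[OF ws \<open>y \<in> V\<close> y(1)] y(2) by simp
    then show False using longest by force
  next
    case 3
    \<comment> \<open>otherwise ws ! i has the three neighbours ws ! (i - 1), ws ! Suc i and y\<close>
    have "E (ws ! i) (ws ! (i - 1))" "E (ws ! i) (ws ! Suc i)"
      using 3 ws'(4)[of "i - 1"] ws'(4)[of i] sym by auto
    moreover have "ws ! i \<in> V" using i ws'(3) nth_mem by blast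
    moreover have "ws ! (i - 1) \<noteq> ws ! Suc i"
      using 3 ws'(1) nth_eq_iff_index_eq by fastforce
    moreover have "ws ! (i - 1) \<noteq> y" "ws ! Suc i \<noteq> y"
      using 3 y(1) by auto
    ultimately show False
      using max_degree_2[of "ws ! i" "ws ! (i - 1)" "ws ! Suc i" y] y(2) by blast
  qed
qed

lemma tree_max_degree_2_is_path_graph:
  assumes tree: "is_tree V E"
    and max_degree_2: "\<And>v a b c. v \<in> V \<Longrightarrow> E v a \<Longrightarrow> E v b \<Longrightarrow> E v c \<Longrightarrow> a = b \<or> a = c \<or> b = c"
  shows "is_path_graph V E"
proof -
  have G: "simple_graph V E" and "connected_graph V E" "\<nexists>cs. is_cycle V E cs" "V \<noteq> {}"
    using tree unfolding is_tree_def by auto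
  moreover have "finite V" using G unfolding simple_graph_def by simp
  ultimately obtain ws where ws: "is_simple_path V E ws"
    "\<And>ys. is_simple_path V E ys \<Longrightarrow> length ys \<le> length ws"
    using longest_simple_path_exists by metis
  have "set ws = V"
    using longest_simple_path_spans[OF G \<open>connected_graph V E\<close> max_degree_2 ws] .
  from this acyclic_simple_path_no_chord[OF G \<open>\<nexists>cs. is_cycle V E cs\<close> ws(1)]
  show ?thesis
    by (rule spanning_chordless_simple_path_is_path_graph[OF G ws(1)])
qed

theorem corollary1p9:
  fixes V :: "'a set" and E :: "'a \<Rightarrow> 'a \<Rightarrow> bool"
  assumes "is_tree V E"
  shows "sortable (independence_complex V E) \<longleftrightarrow> is_path_graph V E"
proof
  assume sortable: "sortable (independence_complex V E)"
  have G: "simple_graph V E" and acyclic: "\<nexists>cs. is_cycle V E cs"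
    using assms unfolding is_tree_def by auto
  show "is_path_graph V E"
  proof (rule tree_max_degree_2_is_path_graph[OF assms])
    fix v a b c assume "v \<in> V" "E v a" "E v b" "E v c"
    show "a = b \<or> a = c \<or> b = c"
    proof (rule ccontr)
      assume "\<not> (a = b \<or> a = c \<or> b = c)"
      then have "\<not> sortable (independence_complex V E)"
        using claw_not_sortable[OF G \<open>v \<in> V\<close> \<open>E v a\<close> \<open>E v b\<close> \<open>E v c\<close>]
          acyclic_no_triangle[OF G acyclic \<open>E v a\<close> \<open>E v b\<close>]
          acyclic_no_triangle[OF G acyclic \<open>E v a\<close> \<open>E v c\<close>]
          acyclic_no_triangle[OF G acyclic \<open>E v b\<close> \<open>E v c\<close>]
        by blast
      with sortable show False by contradiction
    qed
  qed
next
  assume "is_path_graph V E"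
  then show "sortable (independence_complex V E)" by (rule path_graph_sortable)
qed

end
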